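(* Fix $L,V,W,K>0$, $\pi\in(0,1)$ and $k_0\in[0,K]$, and regard $\phi_1=\frac{k_0}{k_1}\pi C$ and $\phi_2=\frac{K-k_0}{K-k_2}\pi C$ as functions of the cycle length $T>0$ (with $k_1,k_2$ as in the context). Then: (1) $\phi_1$ is continuous in $T$; $\phi_1$ equals its global minimum $\pi Vk_0$ for all $T\ge\frac1\pi\frac LV$, reaches its global maximum $Vk_0$ at $T=\frac1{j_1}\frac LV$, and reaches local minima $\frac{j_1+\pi}{j_1+1}Vk_0$ at $T=\frac1{j_1+\pi}\frac LV$, for positive integers $j_1$. In particular, for $\frac LV\le T\le\frac1\pi\frac LV$, $\phi_1=\frac{k_0L}{T}$. (2) $\phi_2$ is continuous in $T$; $\phi_2$ equals its global minimum $\pi(K-k_0)W$ for all $T\ge\frac1\pi\frac LW$, reaches its global maximum $(K-k_0)W$ at $T=\frac1{j_2}\frac LW$, and reaches local minima $\frac{j_2+\pi}{j_2+1}(K-k_0)W$ at $T=\frac1{j_2+\pi}\frac LW$, for positive integers $j_2$. In particular, for $\frac LW\le T\le\frac1\pi\frac LW$, $\phi_2=\frac{(K-k_0)L}{T}$.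
   Context: $\bar K=\frac{W}{V+W}K$, $C=V\bar K$. For a cycle length $T>0$ write $\frac LV=(j_1+\alpha_1)T$ with $j_1=\lfloor L/(VT)\rfloor$, $0\le\alpha_1<1$, and $\frac LW=(j_2+\alpha_2)T$ with $j_2=\lfloor L/(WT)\rfloor$, $0\le\alpha_2<1$; define $k_1=\frac{j_1+\min\{\alpha_1/\pi,1\}}{j_1+\alpha_1}\pi\bar K$ and $k_2=K-\frac{j_2+\min\{\alpha_2/\pi,1\}}{j_2+\alpha_2}\pi\frac CW$. (These arise from a ring road of length $L$ with LWR traffic, triangular fundamental diagram $\min\{Vk,(K-k)W\}$, average density $k_0$, and a pretimed signal of cycle length $T$ and effective green ratio $\pi$.) *)

theory Defs
  imports "HOL-Analysis.Analysis"
begin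

text \<open>Ring road of length L, free-flow speed V, backward wave speed W, jam density K,
  effective green ratio p (the paper's pi), cycle length T.\<close>

definition Kbar :: "real \<Rightarrow> real \<Rightarrow> real \<Rightarrow> real" where
  "Kbar V W K = W / (V + W) * K"

definition Ccap :: "real \<Rightarrow> real \<Rightarrow> real \<Rightarrow> real" where
  "Ccap V W K = V * Kbar V W K"

definition j1 :: "real \<Rightarrow> real \<Rightarrow> real \<Rightarrow> real" where
  "j1 L V T = real_of_int \<lfloor>L / (V * T)\<rfloor>"

definition alpha1 :: "real \<Rightarrow> real \<Rightarrow> real \<Rightarrow> real" where
  "alpha1 L V T = L / (V * T) - j1 L V T"

definition j2 :: "real \<Rightarrow> real \<Rightarrow> real \<Rightarrow> real" where
  "j2 L W T = real_of_int \<lfloor>L / (W * T)\<rfloor>"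

definition alpha2 :: "real \<Rightarrow> real \<Rightarrow> real \<Rightarrow> real" where
  "alpha2 L W T = L / (W * T) - j2 L W T"

definition k1 :: "real \<Rightarrow> real \<Rightarrow> real \<Rightarrow> real \<Rightarrow> real \<Rightarrow> real \<Rightarrow> real" where
  "k1 L V W K p T =
     (j1 L V T + min (alpha1 L V T / p) 1) / (j1 L V T + alpha1 L V T) * p * Kbar V W K"

definition k2 :: "real \<Rightarrow> real \<Rightarrow> real \<Rightarrow> real \<Rightarrow> real \<Rightarrow> real \<Rightarrow> real" where
  "k2 L V W K p T =
     K - (j2 L W T + min (alpha2 L W T / p) 1) / (j2 L W T + alpha2 L W T) * p * (Ccap V W K / W)"

definition phi1 :: "real \<Rightarrow> real \<Rightarrow> real \<Rightarrow> real \<Rightarrow> real \<Rightarrow> real \<Rightarrow> real \<Rightarrow> real" where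
  "phi1 L V W K p k0 T = k0 / k1 L V W K p T * p * Ccap V W K"

definition phi2 :: "real \<Rightarrow> real \<Rightarrow> real \<Rightarrow> real \<Rightarrow> real \<Rightarrow> real \<Rightarrow> real \<Rightarrow> real" where
  "phi2 L V W K p k0 T = (K - k0) / (K - k2 L V W K p T) * p * Ccap V W K"

definition local_min_pos :: "(real \<Rightarrow> real) \<Rightarrow> real \<Rightarrow> bool" where
  "local_min_pos f T0 \<longleftrightarrow> (\<exists>d>0. \<forall>T. T > 0 \<and> \<bar>T - T0\<bar> < d \<longrightarrow> f T0 \<le> f T)"

end

theory Submission imports Defs begin

text \<open>Writing \<open>x = L/(S T)\<close> for the number of cycles a wave of speed \<open>S\<close> needs to travel
  around the ring (\<open>S = V\<close> for \<open>\<phi>\<^sub>1\<close>, \<open>S = W\<close> for \<open>\<phi>\<^sub>2\<close>), both flows have the form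
  \<open>c S \<cdot> x / D(x)\<close> with \<open>D(j + \<alpha>) = j + min (\<alpha>/\<pi>) 1\<close> and \<open>c = k\<^sub>0\<close>, resp. \<open>c = K - k\<^sub>0\<close>.
  \<open>D\<close> is continuous, grows with slope \<open>1/\<pi>\<close> on \<open>[j, j+\<pi>]\<close> and is flat on \<open>[j+\<pi>, j+1]\<close>,
  so the ratio \<open>x / D(x)\<close> lies in \<open>[\<pi>, 1]\<close>, equals 1 at positive integers, is minimal on
  each \<open>(j, j+1)\<close> at \<open>j + \<pi>\<close>, equals \<open>x\<close> on \<open>[\<pi>, 1]\<close> and \<open>\<pi>\<close> on \<open>(0, \<pi>]\<close>.\<close>

definition green_count :: "real \<Rightarrow> real \<Rightarrow> real" where
  "green_count p x = of_int \<lfloor>x\<rfloor> + min ((x - of_int \<lfloor>x\<rfloor>) / p) 1"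

definition flow_factor :: "real \<Rightarrow> real \<Rightarrow> real" where
  "flow_factor p x = x / green_count p x"

lemma le_green_count:
  assumes "0 < p" "p \<le> 1"
  shows "x \<le> green_count p x"
proof -
  have "x - of_int \<lfloor>x\<rfloor> \<le> (x - of_int \<lfloor>x\<rfloor>) / p"
    using assms by (simp add: le_divide_eq mult_left_le)
  then show ?thesis unfolding green_count_def by linarith
qed

lemma green_count_pos:
  assumes "0 < p" "p \<le> 1" "0 < x"
  shows "0 < green_count p x"
  using le_green_count[OF assms(1,2), of x] assms(3) by linarith

lemma mult_green_count_le:
  assumes "0 < p" "p \<le> 1" "0 \<le> x"
  shows "p * green_count p x \<le> x"
proof -
  have "p * min ((x - of_int \<lfloor>x\<rfloor>) / p) 1 \<le> x - of_int \<lfloor>x\<rfloor>"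
    using assms by (simp add: min_def)
  moreover have "p * of_int \<lfloor>x\<rfloor> \<le> of_int \<lfloor>x\<rfloor>"
    using assms by (simp add: mult_left_le_one_le)
  ultimately show ?thesis unfolding green_count_def by (simp add: distrib_left)
qed

lemma flow_factor_ge:
  assumes "0 < p" "p \<le> 1" "0 < x"
  shows "p \<le> flow_factor p x"
  using mult_green_count_le[OF assms(1,2)] green_count_pos[OF assms] assms(3)
  unfolding flow_factor_def by (simp add: le_divide_eq)

lemma flow_factor_le_one:
  assumes "0 < p" "p \<le> 1" "0 < x"
  shows "flow_factor p x \<le> 1"
  using le_green_count[OF assms(1,2), of x] assms(3)
  unfolding flow_factor_def by (simp add: divide_le_eq)

lemma flow_factor_below_p:
  assumes "0 < p" "p < 1" "0 < x" "x \<le> p"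
  shows "flow_factor p x = p"
proof -
  have "\<lfloor>x\<rfloor> = 0" using assms by (simp add: floor_eq_iff)
  then show ?thesis using assms unfolding flow_factor_def green_count_def by (simp add: min_def)
qed

lemma flow_factor_between_p_one:
  assumes "0 < p" "p \<le> x" "x \<le> 1"
  shows "flow_factor p x = x"
proof (cases "x = 1")
  case True
  then show ?thesis unfolding flow_factor_def green_count_def by simp
next
  case False
  then have "\<lfloor>x\<rfloor> = 0" using assms by (simp add: floor_eq_iff)
  moreover have "1 \<le> x / p" using assms by (simp add: le_divide_eq)
  ultimately show ?thesis using assms unfolding flow_factor_def green_count_def by (simp add: min_def)
qed

lemma flow_factor_of_nat:
  assumes "1 \<le> n"
  shows "flow_factor p (real n) = 1"
  using assms unfolding flow_factor_def green_count_def by simp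

lemma flow_factor_nat_plus_p:
  assumes "0 < p" "p < 1"
  shows "flow_factor p (real n + p) = (real n + p) / (real n + 1)"
proof -
  have "\<lfloor>real n + p\<rfloor> = int n" using assms by (simp add: floor_eq_iff)
  then show ?thesis using assms unfolding flow_factor_def green_count_def by simp
qed

lemma flow_factor_min_on_unit_interval:
  assumes "0 < p" "p < 1" "1 \<le> n" "real n < x" "x < real n + 1"
  shows "(real n + p) / (real n + 1) \<le> flow_factor p x"
proof -
  define a where "a = x - real n"
  have a: "0 < a" "a < 1" "x = real n + a" using assms by (auto simp: a_def)
  have floor_x: "\<lfloor>x\<rfloor> = int n" using assms by (simp add: floor_eq_iff)
  show ?thesis
  proof (cases "a \<le> p")
    case True
    then have count: "green_count p x = real n + a / p"
      unfolding green_count_def floor_x using assms a by (simp add: min_def divide_le_eq)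
    have "(real n + a) * (real n + 1) - (real n + p) * (real n + a / p)
          = real n * ((1 - p) * (1 - a / p))"
      using assms by (simp add: field_simps)
    moreover have "0 \<le> real n * ((1 - p) * (1 - a / p))"
      using True assms by (intro mult_nonneg_nonneg) (auto simp: divide_le_eq)
    ultimately have "(real n + p) * (real n + a / p) \<le> (real n + a) * (real n + 1)"
      by linarith
    moreover have "0 < real n + a / p" using a assms by (simp add: add_pos_pos)
    ultimately have "(real n + p) / (real n + 1) \<le> (real n + a) / (real n + a / p)"
      by (simp add: divide_simps)
    then show ?thesis unfolding flow_factor_def count using a(3) by simp
  next
    case False
    then have count: "green_count p x = real n + 1"
      unfolding green_count_def floor_x using assms a by (simp add: min_def le_divide_eq)
    show ?thesis
      unfolding flow_factor_def count using False a(3) by (intro divide_right_mono) auto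
  qed
qed

lemma continuous_on_green_count_unit_interval:
  assumes "0 < p" "p \<le> 1"
  shows "continuous_on {of_int n .. of_int n + 1} (green_count p)"
proof -
  have "green_count p x = of_int n + min ((x - of_int n) / p) 1"
    if "x \<in> {of_int n .. of_int n + 1}" for x
  proof (cases "x = of_int n + 1")
    \<comment> \<open>at the right end the jump of the floor is absorbed by the \<open>min\<close> term\<close>
    case True
    then show ?thesis using assms unfolding green_count_def by (simp add: min_def le_divide_eq)
  next
    case False
    then have "\<lfloor>x\<rfloor> = n" using that by (simp add: floor_eq_iff)
    then show ?thesis unfolding green_count_def by simp
  qed
  moreover have "continuous_on {of_int n .. of_int n + 1}
      (\<lambda>x. of_int n + min ((x - of_int n) / p) (1::real))"
    using assms by (intro continuous_intros) auto
  ultimately show ?thesis using continuous_on_cong by (metis (no_types, lifting))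
qed

lemma isCont_green_count:
  assumes "0 < p" "p \<le> 1"
  shows "isCont (green_count p) x"
proof -
  define n where "n = \<lfloor>x\<rfloor>"
  have "continuous_on ({of_int (n - 1) .. of_int (n - 1) + 1} \<union> {of_int n .. of_int n + 1})
      (green_count p)"
    by (intro continuous_on_closed_Un continuous_on_green_count_unit_interval assms) auto
  moreover have "{of_int (n - 1) .. of_int (n - 1) + 1} \<union> {of_int n .. of_int n + 1}
      = {of_int n - 1 .. of_int n + (1::real)}"
    by auto
  ultimately have "continuous_on {of_int n - 1 .. of_int n + (1::real)} (green_count p)"
    by simp
  then have "continuous_on {of_int n - 1 <..< of_int n + (1::real)} (green_count p)"
    by (rule continuous_on_subset) auto
  moreover have "x \<in> {of_int n - 1 <..< of_int n + (1::real)}"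
    using of_int_floor_le[of x] real_of_int_floor_add_one_gt[of x]
    unfolding n_def greaterThanLessThan_iff by linarith
  ultimately show ?thesis using continuous_on_eq_continuous_at open_greaterThanLessThan by blast
qed

lemma isCont_flow_factor:
  assumes "0 < p" "p \<le> 1" "0 < x"
  shows "isCont (flow_factor p) x"
  unfolding flow_factor_def[abs_def]
  using isCont_green_count[OF assms(1,2)] green_count_pos[OF assms]
  by (intro continuous_intros) auto

definition flow_profile :: "real \<Rightarrow> real \<Rightarrow> real \<Rightarrow> real \<Rightarrow> real \<Rightarrow> real" where
  "flow_profile p c S L T = c * S * flow_factor p (L / (S * T))"

lemma phi1_eq_flow_profile:
  assumes "0 < L" "0 < V" "0 < W" "0 < K" "0 < p" "p < 1" "0 < T"
  shows "phi1 L V W K p k0 T = flow_profile p k0 V L T"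
proof -
  define x where "x = L / (V * T)"
  have "0 < x" "0 < green_count p x"
    using assms green_count_pos[of p x] by (simp_all add: x_def)
  moreover have "j1 L V T + alpha1 L V T = x"
      "j1 L V T + min (alpha1 L V T / p) 1 = green_count p x"
    unfolding j1_def alpha1_def green_count_def x_def by simp_all
  moreover have "0 < Kbar V W K" using assms unfolding Kbar_def by simp
  ultimately show ?thesis using assms
    unfolding phi1_def k1_def Ccap_def flow_profile_def flow_factor_def x_def[symmetric]
    by (simp add: field_simps)
qed

lemma phi2_eq_flow_profile:
  assumes "0 < L" "0 < V" "0 < W" "0 < K" "0 < p" "p < 1" "0 < T"
  shows "phi2 L V W K p k0 T = flow_profile p (K - k0) W L T"
proof -
  define x where "x = L / (W * T)"
  define M where "M = V * K / (V + W)"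
  have "0 < x" "0 < green_count p x" "0 < M"
    using assms green_count_pos[of p x] by (simp_all add: x_def M_def)
  moreover have count: "K - k2 L V W K p T = green_count p x / x * p * M"
    unfolding k2_def j2_def alpha2_def Ccap_def Kbar_def green_count_def M_def x_def
    using assms by simp
  moreover have capacity: "Ccap V W K = M * W" unfolding Ccap_def Kbar_def M_def by simp
  ultimately show ?thesis
    unfolding phi2_def count capacity flow_profile_def flow_factor_def x_def[symmetric]
    using assms by (simp add: field_simps)
qed

lemma local_min_pos_cong:
  assumes "\<forall>T>0. f T = g T" "0 < T0"
  shows "local_min_pos f T0 \<longleftrightarrow> local_min_pos g T0"
  using assms unfolding local_min_pos_def by auto

context
  fixes p c S L :: real
  assumes p: "0 < p" "p < 1" and c: "0 \<le> c" and S: "0 < S" and L: "0 < L"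
begin

lemma continuous_on_flow_profile: "continuous_on {0<..} (flow_profile p c S L)"
proof (rule continuous_at_imp_continuous_on, intro ballI)
  fix T :: real assume "T \<in> {0<..}"
  then have "isCont (\<lambda>T. L / (S * T)) T" "isCont (flow_factor p) (L / (S * T))"
    using isCont_flow_factor[of p] p S L by (auto intro!: continuous_intros)
  then have "isCont (\<lambda>T. flow_factor p (L / (S * T))) T" by (rule isCont_o2)
  then show "isCont (flow_profile p c S L) T"
    unfolding flow_profile_def[abs_def] by (intro continuous_intros)
qed

lemma flow_profile_bounds:
  assumes "0 < T"
  shows "p * c * S \<le> flow_profile p c S L T" "flow_profile p c S L T \<le> c * S"
  using mult_left_mono[OF flow_factor_ge, of p "L / (S * T)" "c * S"]
    mult_left_mono[OF flow_factor_le_one, of p "L / (S * T)" "c * S"] p c S L assms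
  by (simp_all add: flow_profile_def mult_ac)

lemma flow_profile_long_cycle:
  assumes "1 / p * (L / S) \<le> T"
  shows "flow_profile p c S L T = p * c * S"
proof -
  have "0 < 1 / p * (L / S)" using p S L by simp
  then have "0 < T" using assms by linarith
  moreover have "L / (S * T) \<le> p" using assms p S \<open>0 < T\<close> by (simp add: field_simps)
  ultimately show ?thesis
    using flow_factor_below_p[OF p] S L by (simp add: flow_profile_def)
qed

lemma flow_profile_medium_cycle:
  assumes "L / S \<le> T" "T \<le> 1 / p * (L / S)"
  shows "flow_profile p c S L T = c * L / T"
proof -
  have "0 < L / S" using S L by simp
  then have "0 < T" using assms by linarith
  then have "p \<le> L / (S * T)" "L / (S * T) \<le> 1" using assms p S by (simp_all add: field_simps)
  then show ?thesis
    using flow_factor_between_p_one[OF p(1)] S by (simp add: flow_profile_def)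
qed

lemma flow_profile_at_inverse_nat:
  assumes "1 \<le> j"
  shows "flow_profile p c S L (1 / real j * (L / S)) = c * S"
proof -
  have "L / (S * (1 / real j * (L / S))) = real j" using assms S L by (simp add: field_simps)
  then show ?thesis using flow_factor_of_nat[OF assms] by (simp add: flow_profile_def)
qed

lemma flow_profile_at_inverse_nat_plus_p:
  "flow_profile p c S L (1 / (real j + p) * (L / S)) = (real j + p) / (real j + 1) * c * S"
proof -
  have "L / (S * (1 / (real j + p) * (L / S))) = real j + p"
    using p S L by (simp add: field_simps add_pos_pos)
  then show ?thesis using flow_factor_nat_plus_p[OF p, of j] by (simp add: flow_profile_def)
qed

lemma local_min_flow_profile:
  assumes "1 \<le> j"
  shows "local_min_pos (flow_profile p c S L) (1 / (real j + p) * (L / S))"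
proof -
  define T0 where "T0 = 1 / (real j + p) * (L / S)"
  have "0 < T0" using p S L by (simp add: T0_def add_pos_pos)
  have x0: "L / (S * T0) = real j + p" using p S L by (simp add: T0_def field_simps add_pos_pos)
  have "isCont (\<lambda>T. L / (S * T)) T0" using \<open>0 < T0\<close> S by (intro continuous_intros) auto
  then obtain d where "0 < d"
    and d: "\<And>T. dist T T0 < d \<Longrightarrow> dist (L / (S * T)) (L / (S * T0)) < min p (1 - p)"
    unfolding continuous_at_eps_delta using p by (metis min_less_iff_conj diff_gt_0_iff_gt)
  have "flow_profile p c S L T0 \<le> flow_profile p c S L T" if "\<bar>T - T0\<bar> < d" for T
  proof -
    have "real j < L / (S * T)" "L / (S * T) < real j + 1"
      using d[of T] that x0 by (auto simp: dist_real_def)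
    then have "(real j + p) / (real j + 1) \<le> flow_factor p (L / (S * T))"
      using flow_factor_min_on_unit_interval[OF p assms] by simp
    then have "c * S * ((real j + p) / (real j + 1)) \<le> flow_profile p c S L T"
      unfolding flow_profile_def using c S by (intro mult_left_mono) auto
    then show ?thesis unfolding T0_def flow_profile_at_inverse_nat_plus_p by (simp add: mult_ac)
  qed
  then show ?thesis unfolding local_min_pos_def T0_def[symmetric] using \<open>0 < d\<close> by blast
qed

lemma flow_profile_properties:
  assumes eq: "\<forall>T>0. f T = flow_profile p c S L T"
  shows "continuous_on {0<..} f
     \<and> (\<forall>T>0. p * c * S \<le> f T)
     \<and> (\<forall>T. T \<ge> (1 / p) * (L / S) \<longrightarrow> f T = p * c * S)
     \<and> (\<forall>T>0. f T \<le> c * S)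
     \<and> (\<forall>j::nat. j \<ge> 1 \<longrightarrow> f ((1 / real j) * (L / S)) = c * S)
     \<and> (\<forall>j::nat. j \<ge> 1 \<longrightarrow>
          f ((1 / (real j + p)) * (L / S)) = (real j + p) / (real j + 1) * c * S
          \<and> local_min_pos f ((1 / (real j + p)) * (L / S)))
     \<and> (\<forall>T. L / S \<le> T \<and> T \<le> (1 / p) * (L / S) \<longrightarrow> f T = c * L / T)"
proof (intro conjI allI impI)
  show "continuous_on {0<..} f"
    using continuous_on_flow_profile continuous_on_cong[of "{0<..}" "{0<..}" f] eq by simp
next
  fix T :: real assume "0 < T"
  then show "p * c * S \<le> f T" "f T \<le> c * S" using flow_profile_bounds eq by simp_all
next
  fix T :: real assume T: "1 / p * (L / S) \<le> T"
  have "0 < 1 / p * (L / S)" using p S L by simp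
  then show "f T = p * c * S" using flow_profile_long_cycle[OF T] T eq by simp
next
  fix T :: real assume T: "L / S \<le> T \<and> T \<le> 1 / p * (L / S)"
  have "0 < L / S" using S L by simp
  then show "f T = c * L / T" using flow_profile_medium_cycle T eq by simp
next
  fix j :: nat assume j: "1 \<le> j"
  have "0 < 1 / real j * (L / S)" "0 < 1 / (real j + p) * (L / S)"
    using j p S L by (simp_all add: add_pos_pos)
  then show "f (1 / real j * (L / S)) = c * S"
    "f (1 / (real j + p) * (L / S)) = (real j + p) / (real j + 1) * c * S"
    "local_min_pos f (1 / (real j + p) * (L / S))"
    using eq flow_profile_at_inverse_nat[OF j] flow_profile_at_inverse_nat_plus_p
      local_min_flow_profile[OF j] local_min_pos_cong[OF eq] by simp_all
qed

end

theorem lemma3p4: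
  fixes L V W K p k0 :: real
  assumes "L > 0" "V > 0" "W > 0" "K > 0" "0 < p" "p < 1" "0 \<le> k0" "k0 \<le> K"
  shows
   "(continuous_on {0<..} (phi1 L V W K p k0)
     \<and> (\<forall>T>0. p * V * k0 \<le> phi1 L V W K p k0 T)
     \<and> (\<forall>T. T \<ge> (1 / p) * (L / V) \<longrightarrow> phi1 L V W K p k0 T = p * V * k0)
     \<and> (\<forall>T>0. phi1 L V W K p k0 T \<le> V * k0)
     \<and> (\<forall>j::nat. j \<ge> 1 \<longrightarrow> phi1 L V W K p k0 ((1 / real j) * (L / V)) = V * k0)
     \<and> (\<forall>j::nat. j \<ge> 1 \<longrightarrow>
          phi1 L V W K p k0 ((1 / (real j + p)) * (L / V)) = (real j + p) / (real j + 1) * V * k0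
          \<and> local_min_pos (phi1 L V W K p k0) ((1 / (real j + p)) * (L / V)))
     \<and> (\<forall>T. L / V \<le> T \<and> T \<le> (1 / p) * (L / V) \<longrightarrow> phi1 L V W K p k0 T = k0 * L / T))
  \<and> (continuous_on {0<..} (phi2 L V W K p k0)
     \<and> (\<forall>T>0. p * (K - k0) * W \<le> phi2 L V W K p k0 T)
     \<and> (\<forall>T. T \<ge> (1 / p) * (L / W) \<longrightarrow> phi2 L V W K p k0 T = p * (K - k0) * W)
     \<and> (\<forall>T>0. phi2 L V W K p k0 T \<le> (K - k0) * W)
     \<and> (\<forall>j::nat. j \<ge> 1 \<longrightarrow> phi2 L V W K p k0 ((1 / real j) * (L / W)) = (K - k0) * W)
     \<and> (\<forall>j::nat. j \<ge> 1 \<longrightarrow>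
          phi2 L V W K p k0 ((1 / (real j + p)) * (L / W)) = (real j + p) / (real j + 1) * (K - k0) * W
          \<and> local_min_pos (phi2 L V W K p k0) ((1 / (real j + p)) * (L / W)))
     \<and> (\<forall>T. L / W \<le> T \<and> T \<le> (1 / p) * (L / W) \<longrightarrow> phi2 L V W K p k0 T = (K - k0) * L / T))"
proof -
  have "0 \<le> K - k0" using assms by simp
  have "\<forall>T>0. phi1 L V W K p k0 T = flow_profile p k0 V L T"
    using phi1_eq_flow_profile[OF assms(1-6)] by blast
  note phi1 = flow_profile_properties[OF assms(5,6,7,2,1) this]
  have "\<forall>T>0. phi2 L V W K p k0 T = flow_profile p (K - k0) W L T"
    using phi2_eq_flow_profile[OF assms(1-6)] by blast
  note phi2 = flow_profile_properties[OF assms(5,6) \<open>0 \<le> K - k0\<close> assms(3,1) this]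
  show ?thesis using phi1 phi2 unfolding mult.assoc mult.commute[of k0 V] by blast
qed

end
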